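(* Let $n \geq 2$ and let $(x_i, y_i)_{i=1}^n$ be labeled examples with $x_i \in \mathbb{R}^d$, $y_i \in \{-1,+1\}$ and $\max_i \|x_i\| \leq 1$. Let $X = [x_1,\dots,x_n] \in \mathbb{R}^{d\times n}$ and let $\sigma^2$ satisfy $\sigma^2 \geq \frac{1}{n}\|X\|^2$ (spectral norm). For $b \in \{1,\dots,n\}$ set $\beta_b := 1 + \frac{(b-1)(n\sigma^2-1)}{n-1}$. For $w \in \mathbb{R}^d$ and $A \subseteq \{1,\dots,n\}$ with $|A| = b$ define $$\nabla \hat{L}_A(w) := -\frac{1}{b}\sum_{i\in A} \chi_i(w)\, y_i x_i,$$ where $\chi_i(w) = 1$ if $y_i\langle w, x_i\rangle < 1$ and $\chi_i(w)=0$ otherwise. Then for every $w \in \mathbb{R}^d$, if $A$ is drawn uniformly at random among all subsets of $\{1,\dots,n\}$ of cardinality $b$, $$\mathbb{E}\big[\|\nabla \hat{L}_A(w)\|^2\big] \leq \frac{\beta_b}{b}.$$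
   Context: $\nabla \hat{L}_A(w)$ is a subgradient of the average hinge loss $\hat{L}_A(w) = \frac{1}{b}\sum_{i\in A}\max\{0, 1 - y_i\langle w, x_i\rangle\}$. $\|X\|$ is the spectral norm of $X$. *)

theory Defs
  imports "HOL-Analysis.Analysis" "HOL-Probability.Probability"
begin

text \<open>Examples are indexed by a finite type 'n (so n = CARD('n)), features live in real^'d.\<close>

definition data_matrix :: "('n::finite \<Rightarrow> real^'d::finite) \<Rightarrow> real^'n^'d" where
  "data_matrix x = (\<chi> j i. x i $ j)"

definition spectral_norm :: "real^'n::finite^'m::finite \<Rightarrow> real" where
  "spectral_norm M = onorm (\<lambda>v. M *v v)"

definition chi :: "('n \<Rightarrow> real^'d::finite) \<Rightarrow> ('n \<Rightarrow> real) \<Rightarrow> real^'d \<Rightarrow> 'n \<Rightarrow> real" where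
  "chi x y w i = (if y i * (w \<bullet> x i) < 1 then 1 else 0)"

definition hinge_subgrad :: "('n \<Rightarrow> real^'d::finite) \<Rightarrow> ('n \<Rightarrow> real) \<Rightarrow> 'n set \<Rightarrow> real^'d \<Rightarrow> real^'d" where
  "hinge_subgrad x y A w = - ((1 / real (card A)) *\<^sub>R (\<Sum>i\<in>A. (chi x y w i * y i) *\<^sub>R x i))"

definition beta :: "nat \<Rightarrow> real \<Rightarrow> nat \<Rightarrow> real" where
  "beta n \<sigma>2 b = 1 + (real b - 1) * (real n * \<sigma>2 - 1) / (real n - 1)"

end

theory Submission
  imports Defs
begin

text \<open>Write \<open>z\<^sub>i = \<chi>\<^sub>i(w) y\<^sub>i x\<^sub>i\<close>, so that \<open>b \<nabla>L\<^sub>A(w) = -\<Sum>\<^sub>i\<^sub>\<in>\<^sub>A z\<^sub>i\<close>. Expanding the squared norm into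
  a double sum, the expectation only involves the probabilities \<open>b/n\<close> and \<open>b(b-1)/(n(n-1))\<close> that a
  fixed element, resp. a fixed pair of distinct elements, lies in the random \<open>b\<close>-subset, which gives
  \<open>E \<parallel>\<Sum>\<^sub>i\<^sub>\<in>\<^sub>A z\<^sub>i\<parallel>\<^sup>2 = q\<^sub>2 \<parallel>\<Sum>\<^sub>i z\<^sub>i\<parallel>\<^sup>2 + (q\<^sub>1 - q\<^sub>2) \<Sum>\<^sub>i \<parallel>z\<^sub>i\<parallel>\<^sup>2\<close>. The full sum is \<open>X c\<close> for a vector \<open>c\<close>
  with entries in \<open>[-1,1]\<close>, so its squared norm is at most \<open>\<parallel>X\<parallel>\<^sup>2 n \<le> n\<^sup>2 \<sigma>\<^sup>2\<close>, while each
  \<open>\<parallel>z\<^sub>i\<parallel>\<^sup>2 \<le> 1\<close>; substituting these bounds yields exactly \<open>\<beta>\<^sub>b / b\<close>.\<close>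

lemma card_subsets_containing:
  assumes "finite U" "C \<subseteq> U" "card C \<le> b"
  shows "card {A. A \<subseteq> U \<and> card A = b \<and> C \<subseteq> A} = (card U - card C) choose (b - card C)"
proof -
  have finC: "finite C" using assms(1,2) by (rule rev_finite_subset)
  have "bij_betw (\<lambda>B. B \<union> C) {B. B \<subseteq> U - C \<and> card B = b - card C} {A. A \<subseteq> U \<and> card A = b \<and> C \<subseteq> A}"
  proof (rule bij_betw_byWitness[where f' = "\<lambda>A. A - C"])
    show "(\<lambda>B. B \<union> C) ` {B. B \<subseteq> U - C \<and> card B = b - card C} \<subseteq> {A. A \<subseteq> U \<and> card A = b \<and> C \<subseteq> A}"
    proof (safe)
      fix B assume "B \<subseteq> U - C" "card B = b - card C"
      moreover from this have "finite B" using assms(1) by (meson finite_Diff rev_finite_subset)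
      ultimately show "card (B \<union> C) = b"
        using finC assms(3) by (subst card_Un_disjoint) auto
    qed (use assms in auto)
    show "(\<lambda>A. A - C) ` {A. A \<subseteq> U \<and> card A = b \<and> C \<subseteq> A} \<subseteq> {B. B \<subseteq> U - C \<and> card B = b - card C}"
      using finC by (auto simp: card_Diff_subset)
  qed auto
  then have "card {A. A \<subseteq> U \<and> card A = b \<and> C \<subseteq> A} = card {B. B \<subseteq> U - C \<and> card B = b - card C}"
    by (simp add: bij_betw_same_card)
  also have "\<dots> = (card U - card C) choose (b - card C)"
    using assms finC by (simp add: n_subsets card_Diff_subset)
  finally show ?thesis .
qed

lemma card_subsets_containing_mult_choose:
  assumes "finite U" "C \<subseteq> U" "b \<le> card U"
  shows "(card U choose card C) * card {A. A \<subseteq> U \<and> card A = b \<and> C \<subseteq> A}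
         = (b choose card C) * (card U choose b)"
proof (cases "card C \<le> b")
  case True
  then show ?thesis
    using choose_mult[OF True assms(3)] card_subsets_containing[OF assms(1,2) True]
    by (simp add: mult.commute)
next
  case False
  have "{A. A \<subseteq> U \<and> card A = b \<and> C \<subseteq> A} = {}"
    using False card_mono[OF finite_subset[OF _ assms(1)]] by fastforce
  with False show ?thesis by (simp only: card.empty binomial_eq_0)
qed

lemma of_nat_choose_two: "real (m choose 2) = real m * (real m - 1) / 2"
proof -
  have "even (m * (m - 1))"
    by (cases "even m") auto
  then have "2 * (m choose 2) = m * (m - 1)"
    by (simp add: choose_two dvd_mult_div_cancel)
  then have "2 * real (m choose 2) = real m * real (m - 1)"
    by (metis of_nat_mult of_nat_numeral)
  then show ?thesis
    by (cases m) auto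
qed

text \<open>For \<open>n \<le> 1\<close> division by zero makes \<open>pair_incl_prob n b = 0\<close>, which keeps the
  lemmas below free of side conditions.\<close>

definition incl_prob :: "nat \<Rightarrow> nat \<Rightarrow> real" where
  "incl_prob n b = real b / real n"

definition pair_incl_prob :: "nat \<Rightarrow> nat \<Rightarrow> real" where
  "pair_incl_prob n b = real b * (real b - 1) / (real n * (real n - 1))"

lemma card_subsets_containing_pair:
  fixes i j :: "'n::finite"
  assumes "b \<le> CARD('n)"
  shows "real (card {A::'n set. card A = b \<and> i \<in> A \<and> j \<in> A})
    = (if i = j then incl_prob CARD('n) b else pair_incl_prob CARD('n) b) * real (CARD('n) choose b)"
proof -
  let ?n = "CARD('n)" and ?k = "card {i, j}"
  have "{A::'n set. card A = b \<and> i \<in> A \<and> j \<in> A} = {A. A \<subseteq> UNIV \<and> card A = b \<and> {i, j} \<subseteq> A}"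
    by auto
  then have "(?n choose ?k) * card {A::'n set. card A = b \<and> i \<in> A \<and> j \<in> A} = (b choose ?k) * (?n choose b)"
    using card_subsets_containing_mult_choose[of "UNIV::'n set" "{i, j}" b] assms by simp
  then have "real (?n choose ?k) * real (card {A::'n set. card A = b \<and> i \<in> A \<and> j \<in> A})
      = real (b choose ?k) * real (?n choose b)"
    by (metis of_nat_mult)
  moreover have "real (?n choose ?k) > 0"
    using card_mono[of UNIV "{i, j}"] by simp
  ultimately have count: "real (card {A::'n set. card A = b \<and> i \<in> A \<and> j \<in> A})
      = real (b choose ?k) / real (?n choose ?k) * real (?n choose b)"
    by (simp add: eq_divide_eq mult.commute)
  show ?thesis
  proof (cases "i = j")
    case True
    then show ?thesis using count by (simp add: incl_prob_def)
  next
    case False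
    then have "?k = 2" by simp
    then show ?thesis
      using False count unfolding pair_incl_prob_def by (simp only: of_nat_choose_two if_False) simp
  qed
qed

lemma power2_norm_sum:
  fixes z :: "'i \<Rightarrow> 'a::real_inner"
  shows "(norm (\<Sum>i\<in>A. z i))\<^sup>2 = (\<Sum>i\<in>A. \<Sum>j\<in>A. z i \<bullet> z j)"
  by (simp add: power2_norm_eq_inner inner_sum_left inner_sum_right) (rule sum.swap)

lemma power2_norm_sum_subset:
  fixes z :: "'n::finite \<Rightarrow> 'a::real_inner"
  shows "(norm (\<Sum>i\<in>A. z i))\<^sup>2 = (\<Sum>i\<in>UNIV. \<Sum>j\<in>UNIV. of_bool (i \<in> A \<and> j \<in> A) * (z i \<bullet> z j))"
proof -
  have "(norm (\<Sum>i\<in>A. z i))\<^sup>2 = (\<Sum>i\<in>A. \<Sum>j\<in>A. z i \<bullet> z j)"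
    by (rule power2_norm_sum)
  also have "\<dots> = (\<Sum>i\<in>UNIV. of_bool (i \<in> A) * (\<Sum>j\<in>UNIV. of_bool (j \<in> A) * (z i \<bullet> z j)))"
    by simp
  also have "\<dots> = (\<Sum>i\<in>UNIV. \<Sum>j\<in>UNIV. of_bool (i \<in> A \<and> j \<in> A) * (z i \<bullet> z j))"
    by (simp only: sum_distrib_left of_bool_conj mult.assoc)
  finally show ?thesis .
qed

lemma expectation_power2_norm_sum_random_subset:
  fixes z :: "'n::finite \<Rightarrow> 'a::real_inner"
  assumes "b \<le> CARD('n)"
  shows "measure_pmf.expectation (pmf_of_set {A::'n set. card A = b}) (\<lambda>A. (norm (\<Sum>i\<in>A. z i))\<^sup>2)
    = pair_incl_prob CARD('n) b * (norm (\<Sum>i\<in>UNIV. z i))\<^sup>2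
      + (incl_prob CARD('n) b - pair_incl_prob CARD('n) b) * (\<Sum>i\<in>UNIV. (norm (z i))\<^sup>2)"
proof -
  define S where "S = {A::'n set. card A = b}"
  define N where "N = real (CARD('n) choose b)"
  let ?q1 = "incl_prob CARD('n) b" and ?q2 = "pair_incl_prob CARD('n) b"
  have card_S: "real (card S) = N"
    unfolding S_def N_def using n_subsets[of "UNIV :: 'n set" b] by simp
  have "N > 0"
    unfolding N_def using assms by simp
  have "(\<Sum>A\<in>S. (norm (\<Sum>i\<in>A. z i))\<^sup>2)
      = (\<Sum>A\<in>S. \<Sum>i\<in>UNIV. \<Sum>j\<in>UNIV. of_bool (i \<in> A \<and> j \<in> A) * (z i \<bullet> z j))"
    by (simp only: power2_norm_sum_subset)
  also have "\<dots> = (\<Sum>i\<in>UNIV. \<Sum>j\<in>UNIV. \<Sum>A\<in>S. of_bool (i \<in> A \<and> j \<in> A) * (z i \<bullet> z j))"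
    by (subst sum.swap) (intro sum.cong refl sum.swap)
  also have "\<dots> = (\<Sum>i\<in>UNIV. \<Sum>j\<in>UNIV. real (card (S \<inter> {A. i \<in> A \<and> j \<in> A})) * (z i \<bullet> z j))"
    by (simp only: sum_distrib_right[symmetric])
      (intro sum.cong refl arg_cong2[where f = times] sum_of_bool_eq finite)
  also have "\<dots> = (\<Sum>i\<in>UNIV. \<Sum>j\<in>UNIV. N * ?q2 * (z i \<bullet> z j) + (if i = j then N * (?q1 - ?q2) * (z i \<bullet> z j) else 0))"
  proof (intro sum.cong refl)
    fix i j :: 'n
    have "S \<inter> {A. i \<in> A \<and> j \<in> A} = {A. card A = b \<and> i \<in> A \<and> j \<in> A}"
      unfolding S_def by auto
    then show "real (card (S \<inter> {A. i \<in> A \<and> j \<in> A})) * (z i \<bullet> z j)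
        = N * ?q2 * (z i \<bullet> z j) + (if i = j then N * (?q1 - ?q2) * (z i \<bullet> z j) else 0)"
      using card_subsets_containing_pair[OF assms, of i j] unfolding N_def
      by (simp add: algebra_simps)
  qed
  also have "\<dots> = N * ?q2 * (\<Sum>i\<in>UNIV. \<Sum>j\<in>UNIV. z i \<bullet> z j) + N * (?q1 - ?q2) * (\<Sum>i\<in>UNIV. z i \<bullet> z i)"
    by (simp add: sum.distrib sum_distrib_left)
  also have "\<dots> = N * (?q2 * (norm (\<Sum>i\<in>UNIV. z i))\<^sup>2 + (?q1 - ?q2) * (\<Sum>i\<in>UNIV. (norm (z i))\<^sup>2))"
    unfolding power2_norm_sum by (simp add: power2_norm_eq_inner algebra_simps)
  finally have sum_eq: "(\<Sum>A\<in>S. (norm (\<Sum>i\<in>A. z i))\<^sup>2)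
      = N * (?q2 * (norm (\<Sum>i\<in>UNIV. z i))\<^sup>2 + (?q1 - ?q2) * (\<Sum>i\<in>UNIV. (norm (z i))\<^sup>2))" .
  have "S \<noteq> {}"
    using card_S \<open>N > 0\<close> by auto
  then show ?thesis
    unfolding S_def[symmetric] using sum_eq card_S \<open>N > 0\<close> by (simp add: integral_pmf_of_set)
qed

lemma pair_incl_prob_nonneg: "0 \<le> pair_incl_prob n b"
  unfolding pair_incl_prob_def by (cases b; cases n) auto

lemma pair_incl_prob_le_incl_prob:
  assumes "b \<le> n"
  shows "pair_incl_prob n b \<le> incl_prob n b"
proof (cases "n \<ge> 2")
  case True
  have "pair_incl_prob n b \<le> real b * (real n - 1) / (real n * (real n - 1))"
    unfolding pair_incl_prob_def using assms True
    by (intro divide_right_mono mult_left_mono) auto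
  also have "\<dots> = incl_prob n b"
    unfolding incl_prob_def using True by simp
  finally show ?thesis .
next
  case False
  then have "n = 0 \<or> n = 1" by auto
  with assms show ?thesis
    unfolding pair_incl_prob_def incl_prob_def by auto
qed

lemma beta_div_eq_incl_probs:
  assumes "n \<ge> 2" "b \<ge> 1"
  shows "beta n \<sigma>2 b / real b = (pair_incl_prob n b * (real n)\<^sup>2 * \<sigma>2
      + (incl_prob n b - pair_incl_prob n b) * real n) / (real b)\<^sup>2"
proof -
  have n: "real n \<noteq> 0" "real n - 1 \<noteq> 0"
    using assms(1) by auto
  then have q2: "pair_incl_prob n b * real n = real b * (real b - 1) / (real n - 1)"
    and q1: "incl_prob n b * real n = real b"
    unfolding pair_incl_prob_def incl_prob_def by simp_all
  have "pair_incl_prob n b * (real n)\<^sup>2 * \<sigma>2 + (incl_prob n b - pair_incl_prob n b) * real n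
      = real n * \<sigma>2 * (pair_incl_prob n b * real n) + incl_prob n b * real n - pair_incl_prob n b * real n"
    by (simp add: power2_eq_square algebra_simps)
  also have "\<dots> = real n * \<sigma>2 * (real b * (real b - 1) / (real n - 1)) + real b
      - real b * (real b - 1) / (real n - 1)"
    by (simp only: q1 q2)
  also have "\<dots> = real b * beta n \<sigma>2 b"
    unfolding beta_def by (simp add: algebra_simps diff_divide_distrib add_divide_distrib)
  finally show ?thesis
    using assms(2) by (simp add: power2_eq_square)
qed

lemma data_matrix_mult_vec:
  fixes x :: "'n::finite \<Rightarrow> real^'d::finite"
  shows "data_matrix x *v c = (\<Sum>i\<in>UNIV. c $ i *\<^sub>R x i)"
  by (simp add: vec_eq_iff matrix_vector_mult_def data_matrix_def sum_component mult.commute)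

lemma power2_norm_vec_le_card:
  fixes v :: "real^'n::finite"
  assumes "\<And>i. \<bar>v $ i\<bar> \<le> 1"
  shows "(norm v)\<^sup>2 \<le> real CARD('n)"
proof -
  have "(norm v)\<^sup>2 = (\<Sum>i\<in>UNIV. (v $ i)\<^sup>2)"
    by (simp add: norm_vec_def L2_set_def sum_nonneg)
  also have "\<dots> \<le> (\<Sum>i\<in>(UNIV::'n set). 1)"
    using assms by (intro sum_mono) (simp add: abs_square_le_1)
  finally show ?thesis by simp
qed

lemma power2_norm_combination_le_spectral_norm:
  fixes x :: "'n::finite \<Rightarrow> real^'d::finite"
  assumes "\<And>i. \<bar>c i\<bar> \<le> 1"
  shows "(norm (\<Sum>i\<in>UNIV. c i *\<^sub>R x i))\<^sup>2 \<le> (spectral_norm (data_matrix x))\<^sup>2 * real CARD('n)"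
proof -
  let ?c = "\<chi> i. c i"
  have "norm (data_matrix x *v ?c) \<le> spectral_norm (data_matrix x) * norm ?c"
    unfolding spectral_norm_def by (rule onorm) (rule matrix_vector_mul_bounded_linear)
  then have "norm (\<Sum>i\<in>UNIV. c i *\<^sub>R x i) \<le> spectral_norm (data_matrix x) * norm ?c"
    by (simp add: data_matrix_mult_vec)
  then have "(norm (\<Sum>i\<in>UNIV. c i *\<^sub>R x i))\<^sup>2 \<le> (spectral_norm (data_matrix x))\<^sup>2 * (norm ?c)\<^sup>2"
    by (metis norm_ge_zero power_mono power_mult_distrib)
  also have "\<dots> \<le> (spectral_norm (data_matrix x))\<^sup>2 * real CARD('n)"
    using assms by (intro mult_left_mono power2_norm_vec_le_card) auto
  finally show ?thesis .
qed

lemma norm_hinge_subgrad: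
  "norm (hinge_subgrad x y A w) = norm (\<Sum>i\<in>A. (chi x y w i * y i) *\<^sub>R x i) / real (card A)"
  by (simp add: hinge_subgrad_def)

theorem lemma2:
  fixes x :: "'n::finite \<Rightarrow> real^'d::finite" and y :: "'n \<Rightarrow> real"
    and \<sigma>2 :: real and b :: nat and w :: "real^'d"
  assumes "CARD('n) \<ge> 2"
    and "\<And>i. y i \<in> {-1, 1}"
    and "\<And>i. norm (x i) \<le> 1"
    and "\<sigma>2 \<ge> (1 / real CARD('n)) * (spectral_norm (data_matrix x))\<^sup>2"
    and "1 \<le> b" and "b \<le> CARD('n)"
  shows "measure_pmf.expectation (pmf_of_set {A :: 'n set. card A = b})
           (\<lambda>A. (norm (hinge_subgrad x y A w))\<^sup>2)
         \<le> beta CARD('n) \<sigma>2 b / real b"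
proof -
  let ?n = "CARD('n)" and ?S = "{A :: 'n set. card A = b}"
  let ?q1 = "incl_prob ?n b" and ?q2 = "pair_incl_prob ?n b"
  define c where "c i = chi x y w i * y i" for i
  have c_le: "\<bar>c i\<bar> \<le> 1" for i
    using assms(2)[of i] by (auto simp: c_def chi_def)
  have "?S \<noteq> {}"
    using obtain_subset_with_card_n[of b "UNIV :: 'n set"] assms(6) by auto
  then have "measure_pmf.expectation (pmf_of_set ?S) (\<lambda>A. (norm (hinge_subgrad x y A w))\<^sup>2)
      = measure_pmf.expectation (pmf_of_set ?S) (\<lambda>A. (norm (\<Sum>i\<in>A. c i *\<^sub>R x i))\<^sup>2) / (real b)\<^sup>2"
    by (simp add: integral_pmf_of_set norm_hinge_subgrad c_def power_divide sum_divide_distrib mult.commute)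
  also have "\<dots> = (?q2 * (norm (\<Sum>i\<in>UNIV. c i *\<^sub>R x i))\<^sup>2
      + (?q1 - ?q2) * (\<Sum>i\<in>UNIV. (norm (c i *\<^sub>R x i))\<^sup>2)) / (real b)\<^sup>2"
    using assms(6) by (simp add: expectation_power2_norm_sum_random_subset)
  also have "\<dots> \<le> (?q2 * ((real ?n)\<^sup>2 * \<sigma>2) + (?q1 - ?q2) * real ?n) / (real b)\<^sup>2"
  proof (intro divide_right_mono add_mono mult_left_mono)
    have "(norm (\<Sum>i\<in>UNIV. c i *\<^sub>R x i))\<^sup>2 \<le> (spectral_norm (data_matrix x))\<^sup>2 * real ?n"
      using c_le by (rule power2_norm_combination_le_spectral_norm)
    also have "\<dots> \<le> (real ?n * \<sigma>2) * real ?n"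
      using assms(1,4) by (intro mult_right_mono) (auto simp: field_simps)
    finally show "(norm (\<Sum>i\<in>UNIV. c i *\<^sub>R x i))\<^sup>2 \<le> (real ?n)\<^sup>2 * \<sigma>2"
      by (simp add: power2_eq_square mult_ac)
    have "(norm (c i *\<^sub>R x i))\<^sup>2 \<le> 1" for i
      using c_le[of i] assms(3)[of i] by (simp add: abs_square_le_1 mult_le_one)
    then show "(\<Sum>i\<in>UNIV. (norm (c i *\<^sub>R x i))\<^sup>2) \<le> real ?n"
      using sum_mono[of UNIV "\<lambda>i. (norm (c i *\<^sub>R x i))\<^sup>2" "\<lambda>_. 1"] by simp
  qed (use pair_incl_prob_nonneg pair_incl_prob_le_incl_prob[OF assms(6)] in auto)
  also have "\<dots> = beta ?n \<sigma>2 b / real b"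
    using beta_div_eq_incl_probs[OF assms(1,5)] by (simp add: mult.assoc)
  finally show ?thesis .
qed

end
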